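(* Let $q$ be a prime power, $M\geq2$ an integer, $k\geq 1$, and let $f\in\mathbb{F}_q[x]$ be a SRIM polynomial of degree $2k$ such that $f(x^M)$ has a SRIM factor of degree $2k$. Let $C_f\in\mathrm{Sp}(2k,q)$ be an element with characteristic polynomial $f$. Then there exists $\alpha\in\mathrm{Sp}(2k,q)$ with $\alpha^M=C_f$.
   Context: For a monic polynomial $f$ of degree $r$ with $f(0)\neq0$, $f^*(x)=f(0)^{-1}x^rf(x^{-1})$; $f$ is self-reciprocal if $f=f^*$. SRIM means self-reciprocal irreducible monic. $\mathrm{Sp}(2k,q)$ is the symplectic group of a non-degenerate alternating form on $\mathbb{F}_q^{2k}$. *)

theory Defs
  imports "Jordan_Normal_Form.Char_Poly" "HOL-Computational_Algebra.Polynomial_Factorial"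
begin

(* reciprocal f* = f(0)^{-1} x^r f(1/x); reflect_poly f = x^(degree f) f(1/x) when f(0) \<noteq> 0 *)
definition reciprocal_poly :: "'a::field poly \<Rightarrow> 'a poly" where
  "reciprocal_poly f = Polynomial.smult (inverse (coeff f 0)) (reflect_poly f)"

definition self_reciprocal :: "'a::field poly \<Rightarrow> bool" where
  "self_reciprocal f \<longleftrightarrow> coeff f 0 \<noteq> 0 \<and> reciprocal_poly f = f"

definition srim :: "'a::field poly \<Rightarrow> bool" where
  "srim f \<longleftrightarrow> self_reciprocal f \<and> irreducible f \<and> monic f"

definition nondeg_alternating_mat :: "nat \<Rightarrow> 'a::field mat \<Rightarrow> bool" where
  "nondeg_alternating_mat n J \<longleftrightarrow> J \<in> carrier_mat n n \<and> transpose_mat J = - J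
     \<and> (\<forall>i<n. J $$ (i, i) = 0) \<and> det J \<noteq> 0"

definition symplectic_group :: "nat \<Rightarrow> 'a::field mat \<Rightarrow> 'a mat set" where
  "symplectic_group n J = {A \<in> carrier_mat n n. transpose_mat A * J * A = J}"

end

theory Submission
  imports Defs "HOL-Number_Theory.Cong"
begin

text \<open>Let \<open>g\<close> be a SRIM factor of \<open>f(x\<^sup>M)\<close> of the same degree as \<open>f\<close>. Substituting \<open>x\<^sup>M\<close> for \<open>x\<close>
  embeds the finite field \<open>F[x]/(f)\<close> into \<open>F[x]/(g)\<close>; both have \<open>q\<^sup>2\<^sup>k\<close> elements, so the embedding is
  onto and some \<open>s\<close> satisfies \<open>s(x\<^sup>M) \<equiv> x (mod g)\<close>, whence \<open>s\<^sup>M \<equiv> x (mod f)\<close>. As \<open>g\<close> is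
  self-reciprocal, \<open>x \<mapsto> x\<^sup>-\<^sup>1\<close> is an automorphism of \<open>F[x]/(g)\<close> compatible with the embedding, which
  yields \<open>s(x) s(x\<^sup>-\<^sup>1) \<equiv> 1 (mod f)\<close>. By Cayley-Hamilton these congruences modulo
  \<open>f = \<chi>\<^sub>C\<close> hold for \<open>C\<close> itself: \<open>\<alpha> = s(C)\<close> satisfies \<open>\<alpha>\<^sup>M = C\<close>, and \<open>C\<^sup>T J = J C\<^sup>-\<^sup>1\<close> turns into
  \<open>\<alpha>\<^sup>T J = J s(C\<^sup>-\<^sup>1) = J \<alpha>\<^sup>-\<^sup>1\<close>.\<close>

section \<open>Polynomial congruences under substitution\<close>

lemma cong_mult_lcancel_invertible:
  fixes a b u v m :: "'a::unique_euclidean_ring"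
  assumes "[u * v = 1] (mod m)" and "[u * a = u * b] (mod m)"
  shows "[a = b] (mod m)"
proof -
  have "[a = v * (u * a)] (mod m)"
    using cong_mult[OF assms(1) cong_refl[of a]] by (simp add: ac_simps cong_sym)
  also have "[v * (u * a) = v * (u * b)] (mod m)" using assms(2) by (rule cong_scalar_left)
  also have "[v * (u * b) = b] (mod m)"
    using cong_mult[OF assms(1) cong_refl[of b]] by (simp add: ac_simps)
  finally show ?thesis .
qed

lemma cong_pcompose_inner:
  fixes a b m p :: "'a::field poly"
  assumes "[a = b] (mod m)"
  shows "[p \<circ>\<^sub>p a = p \<circ>\<^sub>p b] (mod m)"
proof (induction p)
  case (pCons c p)
  then show ?case by (simp add: pcompose_pCons assms cong_add cong_mult)
qed simp

lemma cong_pcompose_outer: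
  fixes a b m h :: "'a::field poly"
  assumes "[a = b] (mod m)"
  shows "[a \<circ>\<^sub>p h = b \<circ>\<^sub>p h] (mod m \<circ>\<^sub>p h)"
proof -
  obtain t where "a - b = m * t" using assms by (metis cong_iff_dvd_diff dvdE)
  then have "a \<circ>\<^sub>p h - b \<circ>\<^sub>p h = (m \<circ>\<^sub>p h) * (t \<circ>\<^sub>p h)"
    by (metis pcompose_diff pcompose_mult)
  then show ?thesis by (simp add: cong_iff_dvd_diff)
qed

lemma X_invertible_mod:
  fixes g :: "'a::field poly"
  assumes "coeff g 0 \<noteq> 0"
  shows "\<exists>h. [[:0, 1:] * h = 1] (mod g)"
proof -
  obtain c g' where g: "g = pCons c g'" by (cases g) auto
  then have "c \<noteq> 0" using assms by simp
  then have "[:0, 1:] * Polynomial.smult (- inverse c) g' - 1 = Polynomial.smult (- inverse c) g"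
    unfolding g by (intro poly_eqI) (simp add: coeff_pCons coeff_1 split: nat.split)
  then show ?thesis by (metis cong_iff_dvd_diff dvd_smult dvd_refl)
qed

lemma cong_mult_X_power_cancel:
  fixes m h a b :: "'a::field poly"
  assumes "[[:0, 1:] * h = 1] (mod m)" and "[[:0, 1:] ^ n * a = [:0, 1:] ^ n * b] (mod m)"
  shows "[a = b] (mod m)"
proof (rule cong_mult_lcancel_invertible[OF _ assms(2)])
  show "[[:0, 1:] ^ n * h ^ n = 1] (mod m)"
    using cong_pow[OF assms(1), of n] unfolding power_mult_distrib power_one .
qed

lemma reflect_poly_cong_pcompose:
  fixes m h p :: "'a::field poly"
  assumes h: "[[:0, 1:] * h = 1] (mod m)"
  shows "[[:0, 1:] ^ degree p * (p \<circ>\<^sub>p h) = reflect_poly p] (mod m)"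
proof (induction p)
  case (pCons a p)
  show ?case
  proof (cases "p = 0")
    case False
    let ?x = "[:0, 1:] :: 'a poly"
    have "?x ^ degree (pCons a p) * (pCons a p \<circ>\<^sub>p h) - reflect_poly (pCons a p)
      = ?x ^ degree p * (?x * h - 1) * (p \<circ>\<^sub>p h) + (?x ^ degree p * (p \<circ>\<^sub>p h) - reflect_poly p)"
      using False by (simp add: reflect_poly_pCons' pcompose_pCons monom_altdef algebra_simps)
    also have "m dvd \<dots>"
      using pCons h by (intro dvd_add dvd_mult2 dvd_mult) (auto simp: cong_iff_dvd_diff)
    finally show ?thesis by (simp add: cong_iff_dvd_diff)
  qed simp
qed simp

lemma cong_pcompose_inverse_X:
  fixes g h a b :: "'a::field poly"
  assumes h: "[[:0, 1:] * h = 1] (mod g)" and "g dvd reflect_poly g" and "[a = b] (mod g)"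
  shows "[a \<circ>\<^sub>p h = b \<circ>\<^sub>p h] (mod g)"
proof -
  have "[[:0, 1:] ^ degree g * (g \<circ>\<^sub>p h) = [:0, 1:] ^ degree g * 0] (mod g)"
    using reflect_poly_cong_pcompose[OF h, of g] assms(2)
    by (simp add: cong_iff_dvd_diff) (metis dvd_add diff_add_cancel)
  then have "[g \<circ>\<^sub>p h = 0] (mod g)" by (rule cong_mult_X_power_cancel[OF h])
  then have "g dvd g \<circ>\<^sub>p h" by (simp add: cong_iff_dvd_diff)
  with cong_pcompose_outer[OF assms(3)] show ?thesis by (rule cong_dvd_modulus)
qed

lemma pcompose_X_power_inverse_cong:
  fixes f g h k :: "'a::field poly"
  assumes h: "[[:0, 1:] * h = 1] (mod f)" and k: "[[:0, 1:] * k = 1] (mod g)"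
    and "g dvd f \<circ>\<^sub>p [:0, 1:] ^ M"
  shows "[h \<circ>\<^sub>p [:0, 1:] ^ M = k ^ M] (mod g)"
proof (rule cong_mult_X_power_cancel[OF k, of M])
  have "[([:0, 1:] * h) \<circ>\<^sub>p [:0, 1:] ^ M = 1 \<circ>\<^sub>p [:0, 1:] ^ M] (mod f \<circ>\<^sub>p [:0, 1:] ^ M)"
    using h by (rule cong_pcompose_outer)
  then have "[[:0, 1:] ^ M * (h \<circ>\<^sub>p [:0, 1:] ^ M) = 1] (mod g)"
    using assms(3) by (simp add: pcompose_mult cong_dvd_modulus)
  moreover have "[[:0, 1:] ^ M * k ^ M = 1] (mod g)"
    using cong_pow[OF k, of M] unfolding power_mult_distrib power_one .
  ultimately show "[[:0, 1:] ^ M * (h \<circ>\<^sub>p [:0, 1:] ^ M) = [:0, 1:] ^ M * k ^ M] (mod g)"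
    using cong_trans cong_sym by blast
qed

lemma self_reciprocal_dvd_reflect_poly:
  assumes "self_reciprocal g"
  shows "g dvd reflect_poly g"
proof -
  have "coeff g 0 \<noteq> 0" and "reciprocal_poly g = g" using assms unfolding self_reciprocal_def by auto
  then have "reflect_poly g = Polynomial.smult (coeff g 0) g"
    unfolding reciprocal_poly_def by (metis smult_smult right_inverse smult_1_left)
  then show ?thesis by (metis dvd_refl dvd_smult)
qed

section \<open>Roots of \<open>x\<close> modulo an irreducible polynomial over a finite field\<close>

lemma finite_degree_less: "finite {p::'a::{finite,zero} poly. degree p < n}"
proof -
  have "{p::'a poly. degree p < n} \<subseteq> Poly ` {xs. set xs \<subseteq> UNIV \<and> length xs \<le> n}"
  proof
    fix p :: "'a poly" assume "p \<in> {p. degree p < n}"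
    then have "length (coeffs p) \<le> n"
      by (cases "p = 0") (auto simp: length_coeffs_degree)
    then show "p \<in> Poly ` {xs. set xs \<subseteq> UNIV \<and> length xs \<le> n}"
      by (intro image_eqI[of _ _ "coeffs p"]) auto
  qed
  moreover have "finite (Poly ` {xs. set xs \<subseteq> (UNIV::'a set) \<and> length xs \<le> n})"
    by (intro finite_imageI finite_lists_length_le) simp
  ultimately show ?thesis by (rule finite_subset)
qed

lemma finite_poly_cong_surj:
  fixes f g :: "'a::{field,finite} poly" and F :: "'a poly \<Rightarrow> 'a poly"
  assumes "degree g = degree f" and "degree g > 0"
    and inj: "\<And>p1 p2. [F p1 = F p2] (mod g) \<Longrightarrow> [p1 = p2] (mod f)"
  shows "\<exists>p. [F p = r] (mod g)"
proof -
  define S where "S = {p::'a poly. degree p < degree g}"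
  have "g \<noteq> 0" using assms(2) by auto
  have mod_in_S: "p mod g \<in> S" for p
    by (cases "p mod g = 0") (simp_all add: S_def assms(2) degree_mod_less'[OF \<open>g \<noteq> 0\<close>])
  have "inj_on (\<lambda>p. F p mod g) S"
  proof
    fix p1 p2 assume S: "p1 \<in> S" "p2 \<in> S" and "F p1 mod g = F p2 mod g"
    then have "[p1 = p2] (mod f)" by (intro inj) (simp add: cong_def)
    with S show "p1 = p2" using assms(1) by (simp add: cong_def S_def mod_poly_less)
  qed
  then have "(\<lambda>p. F p mod g) ` S = S"
    using mod_in_S finite_degree_less[of "degree g"] unfolding S_def by (intro endo_inj_surj) auto
  then have "r mod g \<in> (\<lambda>p. F p mod g) ` S" using mod_in_S[of r] by simp
  then obtain p where "F p mod g = r mod g" by (auto simp del: mod_in_S)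
  then show ?thesis unfolding cong_def by blast
qed

lemma irreducible_cong_inverse:
  fixes f t :: "'a::{field,finite} poly"
  assumes "irreducible f" and "\<not> f dvd t"
  shows "\<exists>u. [t * u = 1] (mod f)"
proof (rule finite_poly_cong_surj)
  show "degree f > 0"
    using assms(1) by (auto simp: irreducible_def is_unit_iff_degree)
  have "prime_elem f" using assms(1) by (rule field_poly_irreducible_imp_prime)
  fix u1 u2 assume "[t * u1 = t * u2] (mod f)"
  then have "f dvd t * (u1 - u2)" by (simp add: cong_iff_dvd_diff right_diff_distrib)
  then show "[u1 = u2] (mod f)"
    using \<open>prime_elem f\<close> assms(2) by (simp add: cong_iff_dvd_diff prime_elem_dvd_mult_iff)
qed simp

lemma irreducible_pcompose_cong_cancel:
  fixes f g q :: "'a::{field,finite} poly"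
  assumes "irreducible f" and "g dvd f \<circ>\<^sub>p q" and "\<not> is_unit g"
    and "[p1 \<circ>\<^sub>p q = p2 \<circ>\<^sub>p q] (mod g)"
  shows "[p1 = p2] (mod f)"
proof (rule ccontr)
  assume "\<not> [p1 = p2] (mod f)"
  then have "\<not> f dvd p1 - p2" by (simp add: cong_iff_dvd_diff)
  then obtain u where "[(p1 - p2) * u = 1] (mod f)"
    using irreducible_cong_inverse[OF assms(1)] by blast
  then have "[((p1 - p2) * u) \<circ>\<^sub>p q = 1 \<circ>\<^sub>p q] (mod f \<circ>\<^sub>p q)"
    by (rule cong_pcompose_outer)
  then have one: "[((p1 - p2) * u) \<circ>\<^sub>p q = 1] (mod g)"
    using assms(2) by (simp add: cong_dvd_modulus)
  have zero: "[((p1 - p2) * u) \<circ>\<^sub>p q = 0] (mod g)"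
    using assms(4) by (simp add: pcompose_mult pcompose_diff cong_iff_dvd_diff)
  have "[1 = 0] (mod g)" using cong_trans[OF cong_sym[OF one] zero] .
  then show False using assms(3) by (simp add: cong_iff_dvd_diff)
qed

text \<open>Here \<open>h\<close> represents \<open>x\<^sup>-\<^sup>1\<close> modulo \<open>f\<close>, so the last congruence says \<open>s(x) s(x\<^sup>-\<^sup>1) = 1\<close>
  in \<open>F[x]/(f)\<close>.\<close>

lemma exists_unitary_root_of_X:
  fixes f g :: "'a::{field,finite} poly"
  assumes f: "irreducible f" "coeff f 0 \<noteq> 0"
    and g: "degree g = degree f" "g dvd f \<circ>\<^sub>p [:0, 1:] ^ M" "coeff g 0 \<noteq> 0" "g dvd reflect_poly g"
  shows "\<exists>s h. [[:0, 1:] * h = 1] (mod f) \<and> [s ^ M = [:0, 1:]] (mod f) \<and> [s * (s \<circ>\<^sub>p h) = 1] (mod f)"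
proof -
  let ?x = "[:0, 1:] :: 'a poly" and ?X = "[:0, 1:] ^ M :: 'a poly"
  have "degree g > 0" using f(1) g(1) by (auto simp: irreducible_def is_unit_iff_degree)
  then have "\<not> is_unit g" by (auto simp: is_unit_iff_degree)
  note cancel = irreducible_pcompose_cong_cancel[OF f(1) g(2) this]
  obtain s where s: "[s \<circ>\<^sub>p ?X = ?x] (mod g)"
    using finite_poly_cong_surj[where F = "\<lambda>p. p \<circ>\<^sub>p ?X", OF g(1) \<open>degree g > 0\<close> cancel] by blast
  obtain h where h: "[?x * h = 1] (mod f)" using X_invertible_mod[OF f(2)] by blast
  obtain k where k: "[?x * k = 1] (mod g)" using X_invertible_mod[OF g(3)] by blast
  have "[s ^ M = ?x] (mod f)"
  proof (rule cancel)
    show "[s ^ M \<circ>\<^sub>p ?X = ?x \<circ>\<^sub>p ?X] (mod g)"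
      using cong_pow[OF s, of M] by (simp add: pcompose_hom.hom_power)
  qed
  moreover have "[s * (s \<circ>\<^sub>p h) = 1] (mod f)"
  proof (rule cancel)
    have "[(s \<circ>\<^sub>p h) \<circ>\<^sub>p ?X = s \<circ>\<^sub>p k ^ M] (mod g)"
      using cong_pcompose_inner[OF pcompose_X_power_inverse_cong[OF h k g(2)]]
      by (simp add: pcompose_assoc)
    also have "s \<circ>\<^sub>p k ^ M = (s \<circ>\<^sub>p ?X) \<circ>\<^sub>p k"
      by (simp add: pcompose_assoc[symmetric] pcompose_hom.hom_power)
    also have "[(s \<circ>\<^sub>p ?X) \<circ>\<^sub>p k = ?x \<circ>\<^sub>p k] (mod g)"
      using k g(4) s by (rule cong_pcompose_inverse_X)
    finally have "[(s \<circ>\<^sub>p h) \<circ>\<^sub>p ?X = k] (mod g)" by simp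
    then have "[(s \<circ>\<^sub>p ?X) * ((s \<circ>\<^sub>p h) \<circ>\<^sub>p ?X) = ?x * k] (mod g)"
      by (rule cong_mult[OF s])
    also note k
    finally show "[(s * (s \<circ>\<^sub>p h)) \<circ>\<^sub>p ?X = 1 \<circ>\<^sub>p ?X] (mod g)"
      by (simp add: pcompose_mult)
  qed
  ultimately show ?thesis using h by blast
qed

section \<open>Evaluating polynomials at matrices\<close>

lemma one_smult_mat [simp]: "(1::'a::monoid_mult) \<cdot>\<^sub>m A = A"
  by (intro eq_matI) auto

lemma zero_smult_mat [simp]: "(0::'a::mult_zero) \<cdot>\<^sub>m A = 0\<^sub>m (dim_row A) (dim_col A)"
  by (intro eq_matI) auto

lemma index_mult_mat_sum:
  assumes "A \<in> carrier_mat nr n" "B \<in> carrier_mat n nc" "i < nr" "j < nc"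
  shows "(A * B) $$ (i, j) = (\<Sum>l<n. A $$ (i, l) * B $$ (l, j))"
  using assms by (simp add: scalar_prod_def atLeast0LessThan)

lemma pow_mat_commute:
  assumes "A \<in> carrier_mat n n"
  shows "A * A ^\<^sub>m k = A ^\<^sub>m k * A"
proof (induction k)
  case (Suc k)
  have "A * A ^\<^sub>m Suc k = (A * A ^\<^sub>m k) * A"
    using assms by (simp add: assoc_mult_mat[of _ n n _ n _ n])
  then show ?case using Suc by simp
qed (use assms in simp)

definition poly_mat :: "'a::comm_ring_1 poly \<Rightarrow> 'a mat \<Rightarrow> 'a mat" where
  "poly_mat p A = fold_coeffs (\<lambda>a B. a \<cdot>\<^sub>m 1\<^sub>m (dim_row A) + A * B) p (0\<^sub>m (dim_row A) (dim_row A))"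

lemma poly_mat_0 [simp]: "poly_mat 0 A = 0\<^sub>m (dim_row A) (dim_row A)"
  by (simp add: poly_mat_def)

lemma poly_mat_pCons: "poly_mat (pCons a p) A = a \<cdot>\<^sub>m 1\<^sub>m (dim_row A) + A * poly_mat p A"
proof (cases "a = 0 \<and> p = 0")
  case True
  then show ?thesis by (auto intro!: eq_matI simp: scalar_prod_def)
qed (auto simp: poly_mat_def)

lemma dim_poly_mat [simp]:
  "dim_row (poly_mat p A) = dim_row A" "dim_col (poly_mat p A) = dim_row A"
  by (induction p) (simp_all add: poly_mat_pCons)

lemma poly_mat_carrier [simp]: "A \<in> carrier_mat n n \<Longrightarrow> poly_mat p A \<in> carrier_mat n n"
  by (intro carrier_matI) auto

lemma poly_mat_const: "A \<in> carrier_mat n n \<Longrightarrow> poly_mat [:a:] A = a \<cdot>\<^sub>m 1\<^sub>m n"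
  by (auto simp: poly_mat_pCons intro!: eq_matI)

lemma poly_mat_1 [simp]: "A \<in> carrier_mat n n \<Longrightarrow> poly_mat 1 A = 1\<^sub>m n"
  using poly_mat_const[of A n 1] by (simp add: one_pCons)

lemma poly_mat_X [simp]: "A \<in> carrier_mat n n \<Longrightarrow> poly_mat [:0, 1:] A = A"
  by (auto simp: poly_mat_pCons poly_mat_const intro!: eq_matI)

lemma poly_mat_add:
  assumes A: "A \<in> carrier_mat n n"
  shows "poly_mat (p + q) A = poly_mat p A + poly_mat q A"
proof (induction p q rule: poly_induct2)
  case (pCons a p b q)
  have "poly_mat (pCons a p + pCons b q) A = (a + b) \<cdot>\<^sub>m 1\<^sub>m n + A * (poly_mat p A + poly_mat q A)"
    using pCons A by (simp add: poly_mat_pCons)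
  also have "\<dots> = (a + b) \<cdot>\<^sub>m 1\<^sub>m n + (A * poly_mat p A + A * poly_mat q A)"
    using A by (subst mult_add_distrib_mat[of A n n "poly_mat p A" n]) auto
  also have "\<dots> = poly_mat (pCons a p) A + poly_mat (pCons b q) A"
    using A by (simp add: poly_mat_pCons) (rule eq_matI, auto simp: algebra_simps)
  finally show ?case .
qed (use A in simp)

lemma poly_mat_smult:
  assumes A: "A \<in> carrier_mat n n"
  shows "poly_mat (Polynomial.smult c p) A = c \<cdot>\<^sub>m poly_mat p A"
proof (induction p)
  case (pCons a p)
  have "poly_mat (Polynomial.smult c (pCons a p)) A = (c * a) \<cdot>\<^sub>m 1\<^sub>m n + A * (c \<cdot>\<^sub>m poly_mat p A)"
    using pCons A by (simp add: poly_mat_pCons)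
  also have "\<dots> = c \<cdot>\<^sub>m poly_mat (pCons a p) A"
    using A by (simp add: poly_mat_pCons mult_smult_distrib[of _ n n _ n])
      (auto simp: algebra_simps intro!: eq_matI)
  finally show ?case .
qed (use A in \<open>auto intro!: eq_matI\<close>)

lemma poly_mat_diff:
  assumes A: "A \<in> carrier_mat n n"
  shows "poly_mat (p - q) A = poly_mat p A - poly_mat q A"
proof -
  have "poly_mat (p - q) A = poly_mat p A + (-1) \<cdot>\<^sub>m poly_mat q A"
    using poly_mat_add[OF A, of p "- q"] poly_mat_smult[OF A, of "-1" q] by simp
  also have "\<dots> = poly_mat p A - poly_mat q A"
    using A by (auto intro!: eq_matI)
  finally show ?thesis .
qed

lemma poly_mat_mult:
  assumes A: "A \<in> carrier_mat n n"
  shows "poly_mat (p * q) A = poly_mat p A * poly_mat q A"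
proof (induction p)
  case (pCons a p)
  let ?P = "poly_mat p A" and ?Q = "poly_mat q A"
  have P: "?P \<in> carrier_mat n n" and Q: "?Q \<in> carrier_mat n n" using A by auto
  have "pCons a p * q = Polynomial.smult a q + pCons 0 (p * q)" by simp
  moreover have "0\<^sub>m n n + A * (?P * ?Q) = A * (?P * ?Q)"
    using A P Q by (intro left_add_zero_mat) auto
  ultimately have "poly_mat (pCons a p * q) A = a \<cdot>\<^sub>m ?Q + A * (?P * ?Q)"
    using A pCons by (simp add: poly_mat_add poly_mat_smult poly_mat_pCons)
  also have "\<dots> = (a \<cdot>\<^sub>m 1\<^sub>m n) * ?Q + (A * ?P) * ?Q"
    using A P Q by (simp add: mult_smult_assoc_mat[OF one_carrier_mat Q] assoc_mult_mat[of A n n ?P n ?Q n])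
  also have "\<dots> = poly_mat (pCons a p) A * ?Q"
    using A P Q by (simp add: poly_mat_pCons add_mult_distrib_mat[of _ n n _ ?Q n])
  finally show ?case .
qed (use A in \<open>simp add: left_mult_zero_mat[of _ n n]\<close>)

lemma poly_mat_power:
  assumes A: "A \<in> carrier_mat n n"
  shows "poly_mat (p ^ k) A = poly_mat p A ^\<^sub>m k"
proof (induction k)
  case (Suc k)
  then show ?case
    using A by (simp add: poly_mat_mult pow_mat_commute[OF poly_mat_carrier[OF A]])
qed (use A in simp)

lemma poly_mat_pcompose:
  assumes A: "A \<in> carrier_mat n n"
  shows "poly_mat (p \<circ>\<^sub>p q) A = poly_mat p (poly_mat q A)"
proof (induction p)
  case (pCons a p)
  then show ?case
    using A by (simp add: pcompose_pCons poly_mat_add poly_mat_mult poly_mat_const poly_mat_pCons)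
qed (use A in simp)

lemma poly_mat_commute:
  assumes A: "A \<in> carrier_mat n n"
  shows "poly_mat p A * A = A * poly_mat p A"
  using poly_mat_mult[OF A, of p "[:0, 1:]"] poly_mat_mult[OF A, of "[:0, 1:]" p] A
  by (simp add: mult.commute)

lemma poly_mat_transpose:
  assumes A: "A \<in> carrier_mat n n"
  shows "(poly_mat p A)\<^sup>T = poly_mat p A\<^sup>T"
proof (induction p)
  case (pCons a p)
  have At: "A\<^sup>T \<in> carrier_mat n n" using A by simp
  have "(poly_mat (pCons a p) A)\<^sup>T = (a \<cdot>\<^sub>m 1\<^sub>m n)\<^sup>T + (A * poly_mat p A)\<^sup>T"
    using A by (simp add: poly_mat_pCons transpose_add[of _ n n])
  also have "(A * poly_mat p A)\<^sup>T = (poly_mat p A)\<^sup>T * A\<^sup>T"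
    using A by (intro transpose_mult) auto
  also have "\<dots> = A\<^sup>T * poly_mat p A\<^sup>T" using pCons poly_mat_commute[OF At] by simp
  also have "(a \<cdot>\<^sub>m 1\<^sub>m n)\<^sup>T = a \<cdot>\<^sub>m 1\<^sub>m n" by (intro eq_matI) auto
  finally show ?case using At by (simp add: poly_mat_pCons)
qed (use A in \<open>auto intro!: eq_matI\<close>)

lemma poly_mat_intertwine:
  assumes X: "X \<in> carrier_mat n n" and Y: "Y \<in> carrier_mat n n" and J: "J \<in> carrier_mat n n"
    and XJ: "X * J = J * Y"
  shows "poly_mat p X * J = J * poly_mat p Y"
proof (induction p)
  case 0
  then show ?case using X Y J by (simp add: left_mult_zero_mat[of _ n n] right_mult_zero_mat[of _ n n])
next
  case (pCons a p)
  let ?P = "poly_mat p X" and ?Q = "poly_mat p Y"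
  have P: "?P \<in> carrier_mat n n" and Q: "?Q \<in> carrier_mat n n" using X Y by auto
  have "poly_mat (pCons a p) X * J = (a \<cdot>\<^sub>m 1\<^sub>m n) * J + (X * ?P) * J"
    using X J P by (simp add: poly_mat_pCons add_mult_distrib_mat[of _ n n _ J n])
  also have "(a \<cdot>\<^sub>m 1\<^sub>m n) * J = J * (a \<cdot>\<^sub>m 1\<^sub>m n)"
    using J by (simp add: mult_smult_assoc_mat[OF one_carrier_mat J] mult_smult_distrib[OF J one_carrier_mat])
  also have "(X * ?P) * J = X * (?P * J)" using X P J by (rule assoc_mult_mat)
  also have "\<dots> = X * (J * ?Q)" using pCons by simp
  also have "\<dots> = (J * Y) * ?Q"
    using X J Q XJ by (simp flip: assoc_mult_mat[of _ n n _ n _ n])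
  also have "\<dots> = J * (Y * ?Q)" using J Y Q by (rule assoc_mult_mat)
  also have "J * (a \<cdot>\<^sub>m 1\<^sub>m n) + J * (Y * ?Q) = J * poly_mat (pCons a p) Y"
    using J Y Q by (simp add: poly_mat_pCons mult_add_distrib_mat[of J n n _ n])
  finally show ?case .
qed

lemma poly_mat_monom:
  assumes "A \<in> carrier_mat n n"
  shows "poly_mat (monom c k) A = c \<cdot>\<^sub>m A ^\<^sub>m k"
  using assms by (simp add: monom_altdef poly_mat_smult poly_mat_power)

lemma index_poly_mat_sum:
  assumes "A \<in> carrier_mat n n" "i < n" "j < n"
  shows "poly_mat (\<Sum>k\<in>K. p k) A $$ (i, j) = (\<Sum>k\<in>K. poly_mat (p k) A $$ (i, j))"
proof (induction K rule: infinite_finite_induct)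
  case (insert k K)
  then show ?case using assms by (simp add: poly_mat_add)
qed (use assms in simp_all)

lemma index_poly_mat:
  assumes A: "A \<in> carrier_mat n n" and "i < n" "j < n" and "degree p < N"
  shows "poly_mat p A $$ (i, j) = (\<Sum>k<N. coeff p k * (A ^\<^sub>m k) $$ (i, j))"
proof -
  have "{..<N} = {..N - 1}" using assms(4) by auto
  then have "p = (\<Sum>k<N. monom (coeff p k) k)"
    using poly_as_sum_of_monoms'[of p "N - 1"] assms(4) by simp
  then have "poly_mat p A $$ (i, j) = (\<Sum>k<N. poly_mat (monom (coeff p k) k) A $$ (i, j))"
    using index_poly_mat_sum[OF assms(1-3)] by metis
  also have "\<dots> = (\<Sum>k<N. coeff p k * (A ^\<^sub>m k) $$ (i, j))"
    using assms(1-3) by (simp add: poly_mat_monom)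
  finally show ?thesis .
qed

lemma adj_char_poly_matrix_coeff:
  fixes A :: "'a::comm_ring_1 mat"
  assumes A: "A \<in> carrier_mat n n"
  defines "Q \<equiv> adj_mat (char_poly_matrix A)"
  shows "coeff (char_poly A) k \<cdot>\<^sub>m 1\<^sub>m n
    = (if k = 0 then 0\<^sub>m n n else map_mat (\<lambda>p. coeff p (k - 1)) Q) - map_mat (\<lambda>p. coeff p k) Q * A"
    (is "_ = ?R")
proof -
  have Q: "Q \<in> carrier_mat n n" unfolding Q_def using A by (simp add: adj_mat(1))
  show ?thesis
  proof (rule eq_matI)
    have QP: "Q * char_poly_matrix A = char_poly A \<cdot>\<^sub>m 1\<^sub>m n"
      unfolding Q_def char_poly_def using adj_mat(3)[of "char_poly_matrix A" n] A by simp
    fix r l assume "r < dim_row ?R" "l < dim_col ?R"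
    then have rl: "r < n" "l < n" using A Q by auto
    have "(if r = l then char_poly A else 0) = (Q * char_poly_matrix A) $$ (r, l)" using QP rl by simp
    also have "\<dots> = (\<Sum>j<n. Q $$ (r, j) * char_poly_matrix A $$ (j, l))"
      using Q A rl by (intro index_mult_mat_sum) auto
    also have "\<dots> = (\<Sum>j<n. (if j = l then Q $$ (r, j) * [:0, 1:] else 0) - Q $$ (r, j) * [:A $$ (j, l):])"
      using A rl by (intro sum.cong refl) (auto simp: char_poly_matrix_def algebra_simps)
    finally have "coeff (if r = l then char_poly A else 0) k
      = coeff (\<Sum>j<n. (if j = l then Q $$ (r, j) * [:0, 1:] else 0) - Q $$ (r, j) * [:A $$ (j, l):]) k"
      by (rule arg_cong)
    moreover have "(map_mat (\<lambda>p. coeff p k) Q * A) $$ (r, l) = (\<Sum>j<n. coeff (Q $$ (r, j)) k * A $$ (j, l))"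
      using rl A Q by (subst index_mult_mat_sum[of _ n n A n]) auto
    ultimately show "(coeff (char_poly A) k \<cdot>\<^sub>m 1\<^sub>m n) $$ (r, l) = ?R $$ (r, l)"
      using rl A Q
      by (cases k) (auto simp: coeff_sum sum_subtractf if_distrib[of "\<lambda>p. coeff p _"] mult.commute
          coeff_pCons cong: if_cong)
  qed (use A Q in auto)
qed

text \<open>Writing \<open>B\<^sub>k\<close> for the coefficient of \<open>x\<^sup>k\<close> in \<open>adj(xI - A)\<close>, comparing coefficients in
  \<open>adj(xI - A) (xI - A) = \<chi>(x) I\<close> gives \<open>c\<^sub>k I = B\<^sub>k\<^sub>-\<^sub>1 - B\<^sub>k A\<close>, so \<open>\<Sum> c\<^sub>k A\<^sup>k\<close> telescopes.\<close>

theorem cayley_hamilton_poly_mat: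
  fixes A :: "'a::comm_ring_1 mat"
  assumes A: "A \<in> carrier_mat n n"
  shows "poly_mat (char_poly A) A = 0\<^sub>m n n"
proof -
  define Q where "Q = adj_mat (char_poly_matrix A)"
  define B where "B k = map_mat (\<lambda>p. coeff p k) Q" for k
  define B' where "B' k = (if k = 0 then 0\<^sub>m n n else B (k - 1))" for k
  have Q: "Q \<in> carrier_mat n n" unfolding Q_def using A by (simp add: adj_mat(1))
  then have B: "B k \<in> carrier_mat n n" and B': "B' k \<in> carrier_mat n n" for k
    unfolding B_def B'_def by auto
  have key: "coeff (char_poly A) k \<cdot>\<^sub>m 1\<^sub>m n = B' k - B k * A" for k
    unfolding B'_def B_def Q_def using adj_char_poly_matrix_coeff[OF A] by simp
  have "finite (insert (degree (char_poly A)) ((\<lambda>(r, j). degree (Q $$ (r, j))) ` ({..<n} \<times> {..<n})))"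
    by simp
  then obtain N where N: "degree (char_poly A) < N" "\<And>r j. r < n \<Longrightarrow> j < n \<Longrightarrow> degree (Q $$ (r, j)) < N"
    unfolding finite_nat_iff_bounded by fastforce
  then have "B N = 0\<^sub>m n n" using Q unfolding B_def by (auto intro!: eq_matI coeff_eq_0)
  show ?thesis
  proof (rule eq_matI)
    fix r c assume "r < dim_row (0\<^sub>m n n :: 'a mat)" "c < dim_col (0\<^sub>m n n :: 'a mat)"
    then have rc: "r < n" "c < n" by auto
    define G where "G k = (B' k * A ^\<^sub>m k) $$ (r, c)" for k
    have step: "coeff (char_poly A) k * (A ^\<^sub>m k) $$ (r, c) = G k - G (Suc k)" for k
    proof -
      have "coeff (char_poly A) k * (A ^\<^sub>m k) $$ (r, c) = ((coeff (char_poly A) k \<cdot>\<^sub>m 1\<^sub>m n) * A ^\<^sub>m k) $$ (r, c)"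
        using A rc by (simp add: mult_smult_assoc_mat[OF one_carrier_mat pow_carrier_mat[OF A]])
      also have "\<dots> = (B' k * A ^\<^sub>m k - (B k * A) * A ^\<^sub>m k) $$ (r, c)"
        by (simp add: key minus_mult_distrib_mat[OF B' mult_carrier_mat[OF B A] pow_carrier_mat[OF A]])
      also have "(B k * A) * A ^\<^sub>m k = B k * A ^\<^sub>m Suc k"
        by (simp add: assoc_mult_mat[OF B A pow_carrier_mat[OF A]] pow_mat_commute[OF A])
      moreover have "B' (Suc k) = B k" by (simp add: B'_def)
      ultimately show ?thesis
        using A rc by (simp add: G_def carrier_matD[OF B] carrier_matD[OF B'])
    qed
    have "poly_mat (char_poly A) A $$ (r, c) = (\<Sum>k<Suc N. coeff (char_poly A) k * (A ^\<^sub>m k) $$ (r, c))"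
      using A rc N(1) by (intro index_poly_mat) auto
    also have "\<dots> = G 0 - G (Suc N)" by (simp only: step sum_lessThan_telescope')
    also have "\<dots> = 0"
      using A rc \<open>B N = 0\<^sub>m n n\<close> by (simp add: G_def B'_def)
    finally show "poly_mat (char_poly A) A $$ (r, c) = 0\<^sub>m n n $$ (r, c)" using rc by simp
  qed (use A in simp_all)
qed

lemma poly_mat_cong:
  assumes A: "A \<in> carrier_mat n n" and f: "poly_mat f A = 0\<^sub>m n n" and "[a = b] (mod f)"
  shows "poly_mat a A = poly_mat b A"
proof -
  obtain w where w: "a - b = f * w" using assms(3) unfolding cong_iff_dvd_diff by (rule dvdE)
  have diff: "poly_mat a A - poly_mat b A = 0\<^sub>m n n"
    using A by (simp add: poly_mat_diff[symmetric] w poly_mat_mult f left_mult_zero_mat[of _ n n])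
  show ?thesis
  proof (rule eq_matI)
    fix i j assume "i < dim_row (poly_mat b A)" "j < dim_col (poly_mat b A)"
    moreover from this have "(poly_mat a A - poly_mat b A) $$ (i, j) = 0" using A by (simp add: diff)
    ultimately show "poly_mat a A $$ (i, j) = poly_mat b A $$ (i, j)" using A by simp
  qed simp_all
qed

section \<open>Symplectic roots\<close>

lemma poly_mat_power_root:
  assumes A: "A \<in> carrier_mat n n" and f: "poly_mat f A = 0\<^sub>m n n"
    and "[s ^ M = [:0, 1:]] (mod f)"
  shows "poly_mat s A ^\<^sub>m M = A"
  using poly_mat_cong[OF A f assms(3)] A by (simp add: poly_mat_power)

lemma poly_mat_symplectic:
  assumes C: "C \<in> carrier_mat n n" and J: "J \<in> carrier_mat n n" and CJC: "C\<^sup>T * J * C = J"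
    and f: "poly_mat f C = 0\<^sub>m n n"
    and h: "[[:0, 1:] * h = 1] (mod f)" and s: "[s * (s \<circ>\<^sub>p h) = 1] (mod f)"
  shows "(poly_mat s C)\<^sup>T * J * poly_mat s C = J"
proof -
  define D where "D = poly_mat h C"
  have Ct: "C\<^sup>T \<in> carrier_mat n n" and D: "D \<in> carrier_mat n n" using C unfolding D_def by auto
  have "C * D = poly_mat ([:0, 1:] * h) C"
    unfolding D_def by (simp only: poly_mat_mult[OF C] poly_mat_X[OF C])
  also have "\<dots> = 1\<^sub>m n" using poly_mat_cong[OF C f h] C by simp
  finally have "C\<^sup>T * J = (C\<^sup>T * J * C) * D"
    using Ct J C D by (simp add: right_mult_one_mat[of _ n n] assoc_mult_mat[of _ n n _ n _ n])
  then have CtJ: "C\<^sup>T * J = J * D" using CJC by simp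
  have "(poly_mat s C)\<^sup>T * J = J * poly_mat (s \<circ>\<^sub>p h) C"
    using poly_mat_intertwine[OF Ct D J CtJ] C unfolding D_def
    by (simp add: poly_mat_transpose poly_mat_pcompose)
  then have "(poly_mat s C)\<^sup>T * J * poly_mat s C = J * (poly_mat (s * (s \<circ>\<^sub>p h)) C)"
    using J C by (simp add: poly_mat_mult mult.commute[of s] assoc_mult_mat[of _ n n _ n _ n])
  also have "\<dots> = J" using poly_mat_cong[OF C f s] J C by simp
  finally show ?thesis .
qed

theorem lemma5p2:
  fixes f :: "'a::{field,finite} poly" and J C :: "'a mat" and M k :: nat
  assumes "M \<ge> 2" and "k \<ge> 1"
    and "srim f" and "degree f = 2 * k"
    and "\<exists>g. srim g \<and> degree g = 2 * k \<and> g dvd pcompose f (monom 1 M)"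
    and "nondeg_alternating_mat (2 * k) J"
    and "C \<in> symplectic_group (2 * k) J" and "char_poly C = f"
  shows "\<exists>\<alpha> \<in> symplectic_group (2 * k) J. \<alpha> ^\<^sub>m M = C"
proof -
  obtain g where g: "srim g" "degree g = degree f" "g dvd f \<circ>\<^sub>p [:0, 1:] ^ M"
    using assms(4,5) by (auto simp: monom_altdef)
  obtain s h where
    sh: "[[:0, 1:] * h = 1] (mod f)" "[s ^ M = [:0, 1:]] (mod f)" "[s * (s \<circ>\<^sub>p h) = 1] (mod f)"
    using exists_unitary_root_of_X[OF _ _ g(2,3)] assms(3) g(1)
    by (auto simp: srim_def self_reciprocal_def self_reciprocal_dvd_reflect_poly)
  have C: "C \<in> carrier_mat (2 * k) (2 * k)" "C\<^sup>T * J * C = J"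
    using assms(7) unfolding symplectic_group_def by auto
  have J: "J \<in> carrier_mat (2 * k) (2 * k)"
    using assms(6) unfolding nondeg_alternating_mat_def by auto
  have f: "poly_mat f C = 0\<^sub>m (2 * k) (2 * k)"
    using cayley_hamilton_poly_mat[OF C(1)] assms(8) by simp
  have "poly_mat s C \<in> symplectic_group (2 * k) J"
    using poly_mat_symplectic[OF C(1) J C(2) f sh(1,3)] C(1) unfolding symplectic_group_def by simp
  with poly_mat_power_root[OF C(1) f sh(2)] show ?thesis by blast
qed

end
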